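(* Let $X$ be an infinite compact metrizable space and $h\colon X\to X$ a minimal homeomorphism. If $F\subset X$ is closed and topologically $h$-small, then $F$ is universally null.
   Context: $M_h(X)$ denotes the set of $h$-invariant Borel probability measures on $X$; a Borel set is universally null if it has measure $0$ for all $\mu\in M_h(X)$. A closed set $F\subset X$ is topologically $h$-small if there is $m\in\mathbb{Z}_{+}$ such that whenever $d(0),\dots,d(m)$ are $m+1$ distinct integers, $h^{d(0)}(F)\cap\cdots\cap h^{d(m)}(F)=\varnothing$. *)

theory Defs
  imports "HOL-Probability.Probability"
begin

text \<open>Integer powers of a homeomorphism h with inverse g: h^d for d in Z.\<close>
definition hzpow :: "('a \<Rightarrow> 'a) \<Rightarrow> ('a \<Rightarrow> 'a) \<Rightarrow> int \<Rightarrow> 'a \<Rightarrow> 'a" where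
  "hzpow h g d = (if 0 \<le> d then h ^^ nat d else g ^^ nat (- d))"

definition minimal_homeo :: "'a::topological_space set \<Rightarrow> ('a \<Rightarrow> 'a) \<Rightarrow> ('a \<Rightarrow> 'a) \<Rightarrow> bool" where
  "minimal_homeo X h g \<longleftrightarrow> homeomorphism X X h g \<and>
     (\<forall>E. closedin (top_of_set X) E \<and> h ` E = E \<longrightarrow> E = {} \<or> E = X)"

definition inv_measures :: "'a::topological_space set \<Rightarrow> ('a \<Rightarrow> 'a) \<Rightarrow> 'a measure set" where
  "inv_measures X h = {\<mu>. prob_space \<mu> \<and> sets \<mu> = sets (restrict_space borel X) \<and>
      h \<in> measurable \<mu> \<mu> \<and>
      (\<forall>A\<in>sets \<mu>. emeasure \<mu> (h -` A \<inter> space \<mu>) = emeasure \<mu> A)}"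

definition universally_null :: "'a::topological_space set \<Rightarrow> ('a \<Rightarrow> 'a) \<Rightarrow> 'a set \<Rightarrow> bool" where
  "universally_null X h F \<longleftrightarrow> F \<in> sets (restrict_space borel X) \<and>
      (\<forall>\<mu>\<in>inv_measures X h. emeasure \<mu> F = 0)"

definition top_small :: "'a::topological_space set \<Rightarrow> ('a \<Rightarrow> 'a) \<Rightarrow> ('a \<Rightarrow> 'a) \<Rightarrow> 'a set \<Rightarrow> bool" where
  "top_small X h g F \<longleftrightarrow> closedin (top_of_set X) F \<and>
     (\<exists>m::nat. \<forall>d::nat \<Rightarrow> int. inj_on d {0..m} \<longrightarrow>
        (\<Inter>i\<in>{0..m}. hzpow h g (d i) ` F) = {})"

end

theory Submission
  imports Defs
begin

text \<open>Let \<mu> be h-invariant. The translates \<open>h\<^sup>i F\<close> all have measure \<open>\<mu> F\<close>, and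
  topological smallness says that every point lies in at most m of them. Integrating the
  number of translates \<open>h\<^sup>i F\<close>, \<open>i < N\<close>, containing a point therefore gives
  \<open>N \<mu>(F) \<le> m\<close> for every N, so \<open>\<mu>(F) = 0\<close>.\<close>

lemma card_indices_containing_le:
  assumes "\<And>I. I \<subseteq> J \<Longrightarrow> card I = Suc m \<Longrightarrow> (\<Inter>i\<in>I. A i) = {}"
  shows "card {i\<in>J. x \<in> A i} \<le> m"
proof (rule ccontr)
  assume "\<not> ?thesis"
  then obtain I where I: "I \<subseteq> {i\<in>J. x \<in> A i}" "card I = Suc m"
    by (meson not_less_eq_eq obtain_subset_with_card_n)
  then have "x \<in> (\<Inter>i\<in>I. A i)" by blast
  with I assms show False by blast
qed

lemma top_small_translates_disjoint:
  assumes "top_small X h g F"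
  obtains m where "\<And>I. card I = Suc m \<Longrightarrow> (\<Inter>i\<in>I. (h ^^ i) ` F) = {}"
proof -
  obtain m where small: "\<And>d::nat \<Rightarrow> int. inj_on d {0..m} \<Longrightarrow> (\<Inter>k\<in>{0..m}. hzpow h g (d k) ` F) = {}"
    using assms unfolding top_small_def by blast
  have "(\<Inter>i\<in>I. (h ^^ i) ` F) = {}" if "card I = Suc m" for I
  proof -
    have "finite I" using that by (simp add: card_ge_0_finite)
    then obtain f where f: "bij_betw f {0..<card I} I"
      by (rule ex_bij_betw_nat_finite[THEN exE])
    then have f: "bij_betw f {0..m} I"
      using that atLeastLessThanSuc_atLeastAtMost by simp
    then have "inj_on (int \<circ> f) {0..m}"
      by (simp add: bij_betw_def comp_inj_on)
    from small[OF this] have "(\<Inter>k\<in>{0..m}. (h ^^ f k) ` F) = {}"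
      by (simp add: hzpow_def)
    moreover have "I = f ` {0..m}"
      using bij_betw_imp_surj_on[OF f] by simp
    ultimately show ?thesis
      by (simp add: image_comp)
  qed
  then show thesis using that by blast
qed

lemma (in finite_measure) emeasure_eq_0_if_bounded_multiplicity:
  fixes A :: "nat \<Rightarrow> 'a set"
  assumes sets: "\<And>i. A i \<in> sets M"
    and equal: "\<And>i. emeasure M (A i) = emeasure M (A 0)"
    and multiplicity: "\<And>x N. card {i\<in>{..<N}. x \<in> A i} \<le> m"
  shows "emeasure M (A 0) = 0"
proof -
  have bound: "real N * measure M (A 0) \<le> real m * measure M (space M)" for N
  proof -
    have "of_nat N * emeasure M (A 0) = (\<Sum>i<N. emeasure M (A 0))"
      by simp
    also have "\<dots> = (\<Sum>i<N. emeasure M (A i))"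
      by (intro sum.cong refl equal[symmetric])
    also have "\<dots> = (\<integral>\<^sup>+ x. (\<Sum>i<N. indicator (A i) x) \<partial>M)"
      using sets by (simp add: nn_integral_sum)
    also have "\<dots> \<le> (\<integral>\<^sup>+ x. of_nat m \<partial>M)"
    proof (rule nn_integral_mono)
      fix x
      have "(\<Sum>i<N. indicator (A i) x :: ennreal) = of_nat (card {i\<in>{..<N}. x \<in> A i})"
        by (simp add: indicator_def Int_def)
      also have "\<dots> \<le> of_nat m"
        using multiplicity by simp
      finally show "(\<Sum>i<N. indicator (A i) x) \<le> (of_nat m :: ennreal)" .
    qed
    also have "\<dots> = of_nat m * emeasure M (space M)"
      by simp
    finally show ?thesis
      by (simp add: emeasure_eq_measure ennreal_of_nat_eq_real_of_nat ennreal_mult''[symmetric]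
          ennreal_le_iff)
  qed
  have "measure M (A 0) \<le> 0"
  proof (rule ccontr)
    assume "\<not> measure M (A 0) \<le> 0"
    then obtain N where "real m * measure M (space M) < real N * measure M (A 0)"
      using reals_Archimedean3 by (meson not_le)
    with bound show False by (meson not_le)
  qed
  then show ?thesis
    using measure_nonneg[of M "A 0"] by (simp add: emeasure_eq_measure)
qed

lemma inv_measures_funpow:
  assumes "\<mu> \<in> inv_measures X h"
  shows "\<mu> \<in> inv_measures X (h ^^ n)"
proof (induction n)
  case 0
  then show ?case using assms by (simp add: inv_measures_def)
next
  case (Suc n)
  have h: "h \<in> measurable \<mu> \<mu>" "\<And>A. A \<in> sets \<mu> \<Longrightarrow> emeasure \<mu> (h -` A \<inter> space \<mu>) = emeasure \<mu> A"
    using assms by (auto simp: inv_measures_def)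
  have hn: "h ^^ n \<in> measurable \<mu> \<mu>"
    "\<And>A. A \<in> sets \<mu> \<Longrightarrow> emeasure \<mu> ((h ^^ n) -` A \<inter> space \<mu>) = emeasure \<mu> A"
    using Suc by (auto simp: inv_measures_def)
  have "emeasure \<mu> ((h ^^ Suc n) -` A \<inter> space \<mu>) = emeasure \<mu> A" if "A \<in> sets \<mu>" for A
  proof -
    have "(h ^^ Suc n) -` A \<inter> space \<mu> = h -` ((h ^^ n) -` A \<inter> space \<mu>) \<inter> space \<mu>"
      using measurable_space[OF h(1)] by (auto simp: funpow_Suc_right simp del: funpow.simps)
    then have "emeasure \<mu> ((h ^^ Suc n) -` A \<inter> space \<mu>) = emeasure \<mu> ((h ^^ n) -` A \<inter> space \<mu>)"
      by (simp only: h(2)[OF measurable_sets[OF hn(1) that]])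
    also have "\<dots> = emeasure \<mu> A"
      using hn(2) that by simp
    finally show ?thesis .
  qed
  moreover have "h ^^ Suc n \<in> measurable \<mu> \<mu>"
    using measurable_comp[OF h(1) hn(1)] by (simp add: funpow_Suc_right del: funpow.simps)
  ultimately show ?case
    using assms by (simp add: inv_measures_def del: funpow.simps)
qed

lemma space_inv_measures:
  assumes "\<mu> \<in> inv_measures X h"
  shows "space \<mu> = X"
proof -
  have "sets \<mu> = sets (restrict_space borel X)"
    using assms by (simp add: inv_measures_def)
  then show ?thesis
    by (simp add: sets_eq_imp_space_eq space_restrict_space)
qed

lemma inv_measures_emeasure_image:
  assumes "\<mu> \<in> inv_measures X h" and "inj_on h X" and "A \<subseteq> X" and "h ` A \<in> sets \<mu>"
  shows "emeasure \<mu> (h ` A) = emeasure \<mu> A"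
proof -
  have "h -` (h ` A) \<inter> space \<mu> = A"
    using assms(2,3) space_inv_measures[OF assms(1)] by (auto simp: inj_on_def)
  moreover have "emeasure \<mu> (h -` (h ` A) \<inter> space \<mu>) = emeasure \<mu> (h ` A)"
    using assms(1,4) by (simp add: inv_measures_def)
  ultimately show ?thesis
    by simp
qed

lemma homeomorphism_funpow:
  assumes "homeomorphism X X h g"
  shows "homeomorphism X X (h ^^ n) (g ^^ n)"
proof (induction n)
  case 0
  then show ?case by (simp add: homeomorphism_ident id_def)
next
  case (Suc n)
  then show ?case
    using homeomorphism_compose[OF Suc assms] by (simp only: flip: funpow.simps(2) funpow_Suc_right)
qed

lemma compact_in_sets_restrict_borel:
  fixes A :: "'a::t2_space set"
  assumes "compact A" and "A \<subseteq> X"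
  shows "A \<in> sets (restrict_space borel X)"
proof -
  have "A \<in> sets borel"
    using assms(1) by (intro borel_closed compact_imp_closed)
  then have "X \<inter> A \<in> sets (restrict_space borel X)"
    unfolding sets_restrict_space by (rule imageI)
  then show ?thesis
    using assms(2) by (simp add: Int_absorb1)
qed

lemma homeomorphism_image_in_sets_restrict_borel:
  fixes A :: "'a::t2_space set"
  assumes "homeomorphism X X f f'" and "compact A" and "A \<subseteq> X"
  shows "f ` A \<in> sets (restrict_space borel X)"
proof (rule compact_in_sets_restrict_borel)
  have "continuous_on X f" and "f ` X = X"
    using assms(1) by (simp_all add: homeomorphism_def)
  then show "compact (f ` A)" and "f ` A \<subseteq> X"
    using assms(2,3) by (auto intro: compact_continuous_image continuous_on_subset)
qed

theorem corollary3p12: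
  fixes X :: "'a::metric_space set" and h g :: "'a \<Rightarrow> 'a" and F :: "'a set"
  assumes "compact X" and "infinite X"
    and "minimal_homeo X h g"
    and "top_small X h g F"
  shows "universally_null X h F"
proof -
  have hom: "homeomorphism X X (h ^^ i) (g ^^ i)" for i
    using assms(3) by (simp add: minimal_homeo_def homeomorphism_funpow)
  then have inj: "inj_on (h ^^ i) X" for i
    by (meson homeomorphism_apply1 inj_on_inverseI)
  have "closedin (top_of_set X) F"
    using assms(4) by (simp add: top_small_def)
  then have "F \<subseteq> X" and "compact F"
    using assms(1) by (auto simp: closedin_compact closedin_imp_subset)
  then have translates: "(h ^^ i) ` F \<in> sets (restrict_space borel X)" for i
    by (intro homeomorphism_image_in_sets_restrict_borel[OF hom])
  obtain m where small: "\<And>I. card I = Suc m \<Longrightarrow> (\<Inter>i\<in>I. (h ^^ i) ` F) = {}"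
    using top_small_translates_disjoint[OF assms(4)] by blast
  have "emeasure \<mu> F = 0" if \<mu>: "\<mu> \<in> inv_measures X h" for \<mu>
  proof -
    interpret prob_space \<mu>
      using \<mu> by (simp add: inv_measures_def)
    have sets: "(h ^^ i) ` F \<in> sets \<mu>" for i
      using \<mu> translates by (simp add: inv_measures_def)
    have "emeasure \<mu> ((h ^^ 0) ` F) = 0"
    proof (rule emeasure_eq_0_if_bounded_multiplicity[OF sets])
      show "emeasure \<mu> ((h ^^ i) ` F) = emeasure \<mu> ((h ^^ 0) ` F)" for i
        using inv_measures_emeasure_image[OF inv_measures_funpow[OF \<mu>] inj \<open>F \<subseteq> X\<close> sets] by simp
      show "card {i\<in>{..<N}. x \<in> (h ^^ i) ` F} \<le> m" for x N
        by (rule card_indices_containing_le) (simp add: small)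
    qed
    then show ?thesis
      by simp
  qed
  then show ?thesis
    using translates[of 0] by (simp add: universally_null_def)
qed

end
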